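(* Let $(\mathcal S,\mathcal Q,\Theta)$ be a Pufferfish scenario, $f:\mathcal X\to\mathbb R^d$ a query, and $\omega$ a continuous slice distribution on $\mathbb S^{d-1}$. Draw i.i.d. directions $U_1,\dots,U_m\sim\omega$. Assume $0\le\Delta^u_\infty\le\Delta_0$ for all $u$. Fix $\alpha>1$, $\varepsilon>0$, $\gamma\in(0,1)$. Let $\widehat\Delta_\infty(U_\ell)$, $\ell\in[m]$, be random quantities satisfying $\Pr(\Delta^{U_\ell}_\infty\le\widehat\Delta_\infty(U_\ell)\text{ for all }\ell\in[m])\ge1-\gamma/2$, where the probability is over the conditional sampling used to form the $\widehat\Delta_\infty(U_\ell)$. If the Gaussian mechanism uses $N\sim\mathcal N(0,\sigma^2I_d)$ (independent of $X$) with \[ \sigma^2\ge\frac{\alpha}{2\varepsilon}\left(\frac1m\sum_{\ell=1}^m(\widehat\Delta_\infty(U_\ell))^2+\Delta_0^2\sqrt{\frac{\log(4/\gamma)}{2m}}\right), \] then with probability at least $1-\gamma$ (over both the conditional sampling and the draw of $U_{1:m}$), $\mathcal M(X)=f(X)+N$ satisfies $(\alpha,\varepsilon,\omega)$-Ave-SRPP in $(\mathcal S,\mathcal Q,\Theta)$.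
   Context: Pufferfish scenario: secrets $\mathcal S$, pairs $\mathcal Q\subseteq\mathcal S\times\mathcal S$, priors $\Theta$; each $\theta$ is a joint law of secret $S$ and dataset $X$, with secret marginal $P^S_\theta$. $P^{f,s}_\theta$ is the law of $f(X)$ given $S=s$ under $\theta$; $\mathcal M^\theta_s$ the law of $\mathcal M(X)$ given $S=s$ under $\theta$. $\mathbb S^{d-1}$ is the unit sphere, $\Psi^u(a)=\langle a,u\rangle$, $\Psi^u_\#$ pushforward. $W_\infty(\nu,\mu)=\inf_{\pi\in\Pi(\nu,\mu)}\sup_{(x,y)\in\mathrm{supp}\,\pi}|x-y|$ for measures on $\mathbb R$. $\Delta^u_\infty:=\max_{(s_i,s_j)\in\mathcal Q,\theta\in\Theta}W_\infty(\Psi^u_\#P^{f,s_i}_\theta,\Psi^u_\#P^{f,s_j}_\theta)$. $\mathtt D_\alpha$ is R\'enyi divergence; $\mathtt{AveSD}^\omega_\alpha(P\|Q)=\int\mathtt D_\alpha(\Psi^u_\#P\|\Psi^u_\#Q)\,d\omega(u)$. $\mathcal M$ is $(\alpha,\varepsilon,\omega)$-Ave-SRPP in $(\mathcal S,\mathcal Q,\Theta)$ if $\mathtt{AveSD}^\omega_\alpha(\mathcal M^\theta_{s_i}\|\mathcal M^\theta_{s_j})\le\varepsilon$ for all $\theta\in\Theta$ and $(s_i,s_j)\in\mathcal Q$ with $P^S_\theta(s_i),P^S_\theta(s_j)>0$. *)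

theory Defs
  imports "HOL-Probability.Probability"
begin

definition pufferfish_scenario ::
  "'x measure \<Rightarrow> 's set \<Rightarrow> ('s \<times> 's) set \<Rightarrow> ('s \<times> 'x) measure set \<Rightarrow> bool" where
  "pufferfish_scenario MX Sec Q Th \<longleftrightarrow> Q \<subseteq> Sec \<times> Sec \<and>
     (\<forall>\<theta>\<in>Th. prob_space \<theta> \<and> sets \<theta> = sets (count_space UNIV \<Otimes>\<^sub>M MX)
              \<and> emeasure \<theta> (Sec \<times> space MX) = 1)"

definition sec_prob :: "'x measure \<Rightarrow> ('s \<times> 'x) measure \<Rightarrow> 's \<Rightarrow> real" where
  "sec_prob MX \<theta> s = measure \<theta> ({s} \<times> space MX)"

definition cond_data :: "'x measure \<Rightarrow> ('s \<times> 'x) measure \<Rightarrow> 's \<Rightarrow> 'x measure" where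
  "cond_data MX \<theta> s = measure_of (space MX) (sets MX)
      (\<lambda>A. emeasure \<theta> ({s} \<times> A) / emeasure \<theta> ({s} \<times> space MX))"

definition query_law :: "'x measure \<Rightarrow> ('s \<times> 'x) measure \<Rightarrow> ('x \<Rightarrow> real^'d) \<Rightarrow> 's \<Rightarrow> (real^'d) measure" where
  "query_law MX \<theta> f s = distr (cond_data MX \<theta> s) borel f"

definition proj :: "real^'d \<Rightarrow> (real^'d) measure \<Rightarrow> real measure" where
  "proj u P = distr P borel (\<lambda>a. a \<bullet> u)"

definition couplings :: "real measure \<Rightarrow> real measure \<Rightarrow> (real \<times> real) measure set" where
  "couplings \<nu> \<mu> = {\<pi>. prob_space \<pi> \<and> sets \<pi> = sets (borel \<Otimes>\<^sub>M borel)
       \<and> distr \<pi> borel fst = \<nu> \<and> distr \<pi> borel snd = \<mu>}"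

definition msupport :: "'a::topological_space measure \<Rightarrow> 'a set" where
  "msupport M = {z. \<forall>U. open U \<longrightarrow> z \<in> U \<longrightarrow> 0 < emeasure M U}"

definition W_inf :: "real measure \<Rightarrow> real measure \<Rightarrow> ereal" where
  "W_inf \<nu> \<mu> = (INF \<pi> \<in> couplings \<nu> \<mu>. SUP z \<in> msupport \<pi>. ereal \<bar>fst z - snd z\<bar>)"

text \<open>Delta^u_infty (max over pairs in Q and priors, restricted to secrets of positive
  prior probability, for which the conditional laws are defined).\<close>
definition Delta_inf ::
  "'x measure \<Rightarrow> ('s \<times> 's) set \<Rightarrow> ('s \<times> 'x) measure set \<Rightarrow> ('x \<Rightarrow> real^'d) \<Rightarrow> real^'d \<Rightarrow> ereal" where
  "Delta_inf MX Q Th f u =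
     (SUP p \<in> {(si, sj, \<theta>). (si, sj) \<in> Q \<and> \<theta> \<in> Th \<and> sec_prob MX \<theta> si > 0 \<and> sec_prob MX \<theta> sj > 0}.
        (case p of (si, sj, \<theta>) \<Rightarrow>
           W_inf (proj u (query_law MX \<theta> f si)) (proj u (query_law MX \<theta> f sj))))"

definition renyi_div :: "real \<Rightarrow> real measure \<Rightarrow> real measure \<Rightarrow> ennreal" where
  "renyi_div \<alpha> P Q =
     (let I = (\<integral>\<^sup>+ x. ennreal ((enn2real (RN_deriv Q P x)) powr \<alpha>) \<partial>Q)
      in if absolutely_continuous Q P \<and> I \<noteq> \<infinity>
         then ennreal (ln (enn2real I) / (\<alpha> - 1)) else \<infinity>)"

definition ave_sd :: "real \<Rightarrow> (real^'d) measure \<Rightarrow> (real^'d) measure \<Rightarrow> (real^'d) measure \<Rightarrow> ennreal" where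
  "ave_sd \<alpha> \<omega> P Q = (\<integral>\<^sup>+ u. renyi_div \<alpha> (proj u P) (proj u Q) \<partial>\<omega>)"

text \<open>A mechanism is represented by its conditional output laws Mlaw theta s.\<close>
definition ave_srpp ::
  "real \<Rightarrow> real \<Rightarrow> (real^'d) measure \<Rightarrow> 'x measure \<Rightarrow> ('s \<times> 's) set \<Rightarrow> ('s \<times> 'x) measure set
    \<Rightarrow> (('s \<times> 'x) measure \<Rightarrow> 's \<Rightarrow> (real^'d) measure) \<Rightarrow> bool" where
  "ave_srpp \<alpha> \<epsilon> \<omega> MX Q Th Mlaw \<longleftrightarrow>
     (\<forall>\<theta>\<in>Th. \<forall>(si, sj)\<in>Q. sec_prob MX \<theta> si > 0 \<longrightarrow> sec_prob MX \<theta> sj > 0 \<longrightarrow>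
        ave_sd \<alpha> \<omega> (Mlaw \<theta> si) (Mlaw \<theta> sj) \<le> ennreal \<epsilon>)"

definition gauss_vec :: "real \<Rightarrow> (real^'d) measure" where
  "gauss_vec \<sigma> = density lborel (\<lambda>z. ennreal (\<Prod>i\<in>UNIV. normal_density 0 \<sigma> (z $ i)))"

definition gauss_mech_law ::
  "'x measure \<Rightarrow> ('x \<Rightarrow> real^'d) \<Rightarrow> real \<Rightarrow> ('s \<times> 'x) measure \<Rightarrow> 's \<Rightarrow> (real^'d) measure" where
  "gauss_mech_law MX f \<sigma> \<theta> s =
     distr (cond_data MX \<theta> s \<Otimes>\<^sub>M gauss_vec \<sigma>) borel (\<lambda>(x, n). f x + n)"

definition slice_distribution :: "(real^'d) measure \<Rightarrow> bool" where
  "slice_distribution \<omega> \<longleftrightarrow> prob_space \<omega> \<and> sets \<omega> = sets borel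
     \<and> emeasure \<omega> (sphere 0 1) = 1 \<and> (\<forall>u. emeasure \<omega> {u} = 0)"

end

theory Submission
  imports Defs
begin

text \<open>Fix a direction u. Projected onto u, the output of the Gaussian mechanism given S = s is
  a mixture of Gaussians N(a, sigma^2) over the projected query law. A coupling of the
  projected query laws of two secrets with |a - b| <= Delta^u_inf almost surely pairs up the
  mixture components; joint convexity of p^alpha q^(1 - alpha) and the closed form of the Renyi
  divergence between two Gaussians bound the sliced divergence by
  alpha (Delta^u_inf)^2 / (2 sigma^2). Averaging over omega, the mechanism is private as soon as
  sigma^2 >= alpha / (2 epsilon) * E_omega[(Delta^u_inf)^2].

  The summands (Delta^(U_l)_inf)^2 lie in [0, Delta0^2], so by Hoeffding's inequality their
  empirical mean undershoots this expectation by more than Delta0^2 sqrt (ln (4 / gamma) / (2 m))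
  with probability at most gamma / 4. The estimates dominate Delta^(U_l)_inf except with
  probability gamma / 2, so the assumed bound on sigma^2 implies the one above with probability
  at least 1 - 3 gamma / 4.\<close>

section \<open>Renyi divergence between Gaussian mixtures\<close>

lemma divide_powr_mult_eq:
  fixes a b \<alpha> :: real
  assumes "a \<ge> 0" "b > 0"
  shows "(a/b) powr \<alpha> * b = a powr \<alpha> * b powr (1-\<alpha>)"
  using assms by (cases "a = 0") (simp_all add: powr_divide powr_diff field_simps)

lemma divide_powr_diff_one_mult_eq:
  fixes a b \<alpha> :: real
  assumes "a > 0" "b > 0"
  shows "(a/b) powr (\<alpha>-1) * a = a powr \<alpha> * b powr (1-\<alpha>)"
  using assms by (simp add: powr_divide powr_diff field_simps)

text \<open>The tangent line of the convex function \<open>t \<mapsto> t powr \<alpha>\<close> at \<open>r\<close>,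
  evaluated at \<open>t = a / b\<close> and scaled by \<open>b\<close>.\<close>

lemma powr_perspective_tangent:
  fixes a b r \<alpha> :: real
  assumes "\<alpha> > 1" "a \<ge> 0" "b > 0" "r > 0"
  shows "\<alpha> * r powr (\<alpha>-1) * a \<le> a powr \<alpha> * b powr (1-\<alpha>) + (\<alpha>-1) * r powr \<alpha> * b"
proof -
  define q where "q = \<alpha> / (\<alpha> - 1)"
  have q: "q > 1" "1/\<alpha> + 1/q = 1" using assms by (auto simp: q_def field_simps)
  have "(a/b) * r powr (\<alpha>-1) \<le> (a/b) powr \<alpha> / \<alpha> + (r powr (\<alpha>-1)) powr q / q"
    using Youngs_inequality[OF assms(1) q, of "a/b" "r powr (\<alpha>-1)"] assms by simp
  also have "(r powr (\<alpha>-1)) powr q = r powr \<alpha>"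
    using assms by (simp add: powr_powr q_def)
  finally have "\<alpha> * b * ((a/b) * r powr (\<alpha>-1)) \<le> \<alpha> * b * ((a/b) powr \<alpha> / \<alpha> + r powr \<alpha> / q)"
    using assms by (intro mult_left_mono) auto
  also have "\<dots> = (a/b) powr \<alpha> * b + (\<alpha>-1) * r powr \<alpha> * b"
    using assms by (simp add: q_def field_simps)
  finally show ?thesis
    using divide_powr_mult_eq[of a b \<alpha>] assms by (simp add: mult_ac)
qed

text \<open>Joint convexity of \<open>(a, b) \<mapsto> a powr \<alpha> * b powr (1 - \<alpha>)\<close>: integrate the tangent
  inequality at \<open>r = P / R\<close>.\<close>

lemma nn_integral_powr_perspective_ge:
  fixes a b :: "'a \<Rightarrow> real" and P R \<alpha> :: real
  assumes \<alpha>: "\<alpha> > 1"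
    and [measurable]: "a \<in> borel_measurable M" "b \<in> borel_measurable M"
    and a_nonneg: "\<And>x. x \<in> space M \<Longrightarrow> a x \<ge> 0" and b_pos: "\<And>x. x \<in> space M \<Longrightarrow> b x > 0"
    and P: "(\<integral>\<^sup>+x. a x \<partial>M) = ennreal P" "P > 0"
    and R: "(\<integral>\<^sup>+x. b x \<partial>M) = ennreal R" "R > 0"
  shows "ennreal (P powr \<alpha> * R powr (1-\<alpha>)) \<le> (\<integral>\<^sup>+x. ennreal (a x powr \<alpha> * b x powr (1-\<alpha>)) \<partial>M)"
    (is "ennreal ?X \<le> ?G")
proof -
  define r where "r = P / R"
  have r: "r > 0" using P R by (simp add: r_def)
  have "ennreal (\<alpha> * ?X) = ennreal (\<alpha> * r powr (\<alpha>-1)) * (\<integral>\<^sup>+x. a x \<partial>M)"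
    using P R \<alpha> r divide_powr_diff_one_mult_eq[of P R \<alpha>]
    by (simp add: r_def ennreal_mult[symmetric] mult_ac)
  also have "\<dots> = (\<integral>\<^sup>+x. ennreal (\<alpha> * r powr (\<alpha>-1) * a x) \<partial>M)"
    using \<alpha> r a_nonneg by (subst nn_integral_cmult[symmetric]) (auto intro!: nn_integral_cong simp: ennreal_mult)
  also have "\<dots> \<le> (\<integral>\<^sup>+x. ennreal (a x powr \<alpha> * b x powr (1-\<alpha>)) + ennreal ((\<alpha>-1) * r powr \<alpha>) * b x \<partial>M)"
  proof (rule nn_integral_mono)
    fix x assume x: "x \<in> space M"
    have "ennreal (a x powr \<alpha> * b x powr (1-\<alpha>)) + ennreal ((\<alpha>-1) * r powr \<alpha>) * b x
        = ennreal (a x powr \<alpha> * b x powr (1-\<alpha>) + (\<alpha>-1) * r powr \<alpha> * b x)"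
      using \<alpha> b_pos[OF x] by (simp add: ennreal_mult ennreal_plus)
    then show "ennreal (\<alpha> * r powr (\<alpha>-1) * a x)
        \<le> ennreal (a x powr \<alpha> * b x powr (1-\<alpha>)) + ennreal ((\<alpha>-1) * r powr \<alpha>) * b x"
      using powr_perspective_tangent[OF \<alpha> a_nonneg[OF x] b_pos[OF x] r] by (simp add: ennreal_leI)
  qed
  also have "\<dots> = ?G + ennreal ((\<alpha>-1) * r powr \<alpha>) * (\<integral>\<^sup>+x. b x \<partial>M)"
    by (simp add: nn_integral_add nn_integral_cmult)
  also have "\<dots> = ?G + ennreal ((\<alpha>-1) * ?X)"
    using P R \<alpha> r divide_powr_mult_eq[of P R \<alpha>]
    by (simp add: r_def ennreal_mult[symmetric] mult_ac)
  finally have "ennreal ((\<alpha>-1) * ?X) + ennreal ?X \<le> ennreal ((\<alpha>-1) * ?X) + ?G"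
    using \<alpha> P R by (simp add: ennreal_plus[symmetric] algebra_simps add.commute del: ennreal_plus)
  then show ?thesis by (simp add: ennreal_add_left_cancel_le)
qed

lemma normal_density_powr_mult:
  fixes x y z \<sigma> \<alpha> :: real
  assumes "\<sigma> > 0"
  shows "normal_density x \<sigma> z powr \<alpha> * normal_density y \<sigma> z powr (1-\<alpha>)
       = exp (\<alpha>*(\<alpha>-1)*(x-y)\<^sup>2/(2*\<sigma>\<^sup>2)) * normal_density (\<alpha>*x + (1-\<alpha>)*y) \<sigma> z"
proof -
  define s where "s = sqrt (2*pi*\<sigma>\<^sup>2)"
  have s: "s > 0" using assms by (simp add: s_def)
  have nd: "normal_density m \<sigma> z = exp (-(z-m)\<^sup>2/(2*\<sigma>\<^sup>2) - ln s)" for m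
    using s by (simp add: normal_density_def s_def exp_diff)
  \<comment> \<open>completing the square\<close>
  have sq: "\<alpha>*(z-x)\<^sup>2 + (1-\<alpha>)*(z-y)\<^sup>2 = (z-(\<alpha>*x + (1-\<alpha>)*y))\<^sup>2 + \<alpha>*(1-\<alpha>)*(x-y)\<^sup>2"
    by (simp add: power2_eq_square algebra_simps)
  have "\<alpha> * (-(z-x)\<^sup>2/(2*\<sigma>\<^sup>2) - ln s) + (1-\<alpha>) * (-(z-y)\<^sup>2/(2*\<sigma>\<^sup>2) - ln s)
      = -(\<alpha>*(z-x)\<^sup>2 + (1-\<alpha>)*(z-y)\<^sup>2)/(2*\<sigma>\<^sup>2) - ln s"
    using assms by (simp add: field_simps)
  also have "\<dots> = \<alpha>*(\<alpha>-1)*(x-y)\<^sup>2/(2*\<sigma>\<^sup>2) + (-(z-(\<alpha>*x + (1-\<alpha>)*y))\<^sup>2/(2*\<sigma>\<^sup>2) - ln s)"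
    unfolding sq using assms by (simp add: field_simps)
  finally show ?thesis by (simp add: nd powr_def exp_add[symmetric])
qed

lemma nn_integral_normal_density_powr_mult:
  fixes x y \<sigma> \<alpha> :: real
  assumes "\<sigma> > 0"
  shows "(\<integral>\<^sup>+z. ennreal (normal_density x \<sigma> z powr \<alpha> * normal_density y \<sigma> z powr (1-\<alpha>)) \<partial>lborel)
       = ennreal (exp (\<alpha>*(\<alpha>-1)*(x-y)\<^sup>2/(2*\<sigma>\<^sup>2)))"
proof -
  have "(\<integral>\<^sup>+z. ennreal (normal_density (\<alpha>*x + (1-\<alpha>)*y) \<sigma> z) \<partial>lborel) = 1"
    using assms by (subst nn_integral_eq_integral) (auto simp: integrable_normal_density integral_normal_density)
  then show ?thesis
    using assms by (simp add: normal_density_powr_mult ennreal_mult nn_integral_cmult)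
qed

lemma renyi_div_density_le:
  fixes p q :: "real \<Rightarrow> real" and \<alpha> K :: real
  assumes \<alpha>: "\<alpha> > 1"
    and [measurable]: "p \<in> borel_measurable borel" "q \<in> borel_measurable borel"
    and p_nonneg: "\<And>z. p z \<ge> 0" and q_pos: "\<And>z. q z > 0"
    and q_prob: "(\<integral>\<^sup>+z. q z \<partial>lborel) = 1"
    and K: "(\<integral>\<^sup>+z. ennreal (p z powr \<alpha> * q z powr (1-\<alpha>)) \<partial>lborel) \<le> ennreal K" "K > 0"
  shows "renyi_div \<alpha> (density lborel p) (density lborel q) \<le> ennreal (ln K / (\<alpha> - 1))"
proof -
  let ?P = "density lborel p" and ?Q = "density lborel q"
  interpret Q: prob_space ?Q
    by (rule prob_spaceI) (simp add: emeasure_density q_prob space_borel)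
  define h where "h z = ennreal (p z / q z)" for z
  have [measurable]: "h \<in> borel_measurable borel" unfolding h_def by measurable
  have "q z \<noteq> 0" for z using q_pos[of z] by simp
  then have PQ: "density ?Q h = ?P"
    using q_pos p_nonneg
    by (subst density_density_eq) (auto simp: h_def ennreal_mult[symmetric] less_imp_le)
  have AE_RN: "AE z in ?Q. h z = RN_deriv ?Q ?P z"
    by (rule Q.RN_deriv_unique[OF _ PQ]) (simp add: h_def)
  define I where "I = (\<integral>\<^sup>+ z. ennreal ((enn2real (RN_deriv ?Q ?P z)) powr \<alpha>) \<partial>?Q)"
  have "I = (\<integral>\<^sup>+ z. ennreal ((enn2real (h z)) powr \<alpha>) \<partial>?Q)"
    unfolding I_def by (rule nn_integral_cong_AE) (use AE_RN in \<open>auto elim!: eventually_mono\<close>)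
  also have "\<dots> = (\<integral>\<^sup>+ z. ennreal (q z) * ennreal ((p z / q z) powr \<alpha>) \<partial>lborel)"
    using p_nonneg q_pos by (subst nn_integral_density) (auto simp: h_def less_imp_le)
  also have "\<dots> = (\<integral>\<^sup>+ z. ennreal (p z powr \<alpha> * q z powr (1-\<alpha>)) \<partial>lborel)"
    using p_nonneg q_pos divide_powr_mult_eq
    by (intro nn_integral_cong) (simp add: ennreal_mult[symmetric] mult.commute less_imp_le)
  finally have IK: "I \<le> ennreal K" using K(1) by simp
  have "ennreal (ln (enn2real I) / (\<alpha> - 1)) \<le> ennreal (ln K / (\<alpha> - 1))"
  proof (cases "enn2real I > 0")
    case True
    then have "ln (enn2real I) \<le> ln K" using K(2) enn2real_mono[OF IK] by simp
    then show ?thesis using \<alpha> by (intro ennreal_leI divide_right_mono) auto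
  next
    case False
    then have "enn2real I = 0" by (simp add: order.antisym not_less)
    then show ?thesis by simp
  qed
  moreover have "absolutely_continuous ?Q ?P"
    unfolding PQ[symmetric] by (rule absolutely_continuousI_density) (simp add: h_def)
  ultimately show ?thesis
    using IK unfolding renyi_div_def Let_def I_def[symmetric] by (auto simp: top_unique)
qed

lemma borel_measurable_normal_density[measurable (raw)]:
  assumes [measurable]: "f \<in> borel_measurable M" "g \<in> borel_measurable M"
  shows "(\<lambda>x. normal_density (f x) \<sigma> (g x)) \<in> borel_measurable M"
  unfolding normal_density_def by measurable

lemma gauss_mixture_pos_finite:
  fixes \<pi> :: "'a measure" and X :: "'a \<Rightarrow> real"
  assumes "prob_space \<pi>" and [measurable]: "X \<in> borel_measurable \<pi>" and \<sigma>: "\<sigma> > 0"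
  shows "0 < (\<integral>\<^sup>+w. normal_density (X w) \<sigma> z \<partial>\<pi>)" "(\<integral>\<^sup>+w. normal_density (X w) \<sigma> z \<partial>\<pi>) < \<infinity>"
proof -
  interpret prob_space \<pi> by fact
  show "0 < (\<integral>\<^sup>+w. normal_density (X w) \<sigma> z \<partial>\<pi>)"
  proof (rule ccontr)
    assume "\<not> ?thesis"
    then have "AE w in \<pi>. ennreal (normal_density (X w) \<sigma> z) = 0"
      by (simp add: nn_integral_0_iff_AE)
    then have "AE w in \<pi>. False"
      by eventually_elim (metis ennreal_eq_0_iff normal_density_pos[OF \<sigma>] not_le)
    then show False by simp
  qed
  have "(\<integral>\<^sup>+w. normal_density (X w) \<sigma> z \<partial>\<pi>) \<le> (\<integral>\<^sup>+w. ennreal (1 / sqrt (2*pi*\<sigma>\<^sup>2)) \<partial>\<pi>)"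
    using \<sigma> by (intro nn_integral_mono ennreal_leI) (simp add: normal_density_def divide_right_mono)
  then show "(\<integral>\<^sup>+w. normal_density (X w) \<sigma> z \<partial>\<pi>) < \<infinity>"
    by (simp add: emeasure_space_1 le_less_trans)
qed

lemma nn_integral_gauss_mixture:
  fixes \<pi> :: "'a measure" and X :: "'a \<Rightarrow> real"
  assumes "prob_space \<pi>" and [measurable]: "X \<in> borel_measurable \<pi>" and \<sigma>: "\<sigma> > 0"
  shows "(\<integral>\<^sup>+z. (\<integral>\<^sup>+w. normal_density (X w) \<sigma> z \<partial>\<pi>) \<partial>lborel) = 1"
proof -
  interpret prob_space \<pi> by fact
  interpret pair_sigma_finite lborel \<pi> by unfold_locales
  have "(\<integral>\<^sup>+z. ennreal (normal_density m \<sigma> z) \<partial>lborel) = 1" for m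
    using \<sigma> by (subst nn_integral_eq_integral) (auto simp: integrable_normal_density integral_normal_density)
  then show ?thesis by (subst Fubini'[symmetric]) (simp_all add: emeasure_space_1)
qed

lemma nn_integral_gauss_mixtures_powr_le:
  fixes \<pi> :: "'a measure" and X Y :: "'a \<Rightarrow> real" and \<sigma> \<alpha> D :: real
  assumes \<sigma>: "\<sigma> > 0" and \<alpha>: "\<alpha> > 1" and \<pi>: "prob_space \<pi>"
    and [measurable]: "X \<in> borel_measurable \<pi>" "Y \<in> borel_measurable \<pi>"
    and close: "AE w in \<pi>. \<bar>X w - Y w\<bar> \<le> D"
  shows "(\<integral>\<^sup>+z. ennreal (enn2real (\<integral>\<^sup>+w. normal_density (X w) \<sigma> z \<partial>\<pi>) powr \<alpha>
                      * enn2real (\<integral>\<^sup>+w. normal_density (Y w) \<sigma> z \<partial>\<pi>) powr (1-\<alpha>)) \<partial>lborel)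
         \<le> ennreal (exp (\<alpha>*(\<alpha>-1)*D\<^sup>2/(2*\<sigma>\<^sup>2)))"
proof -
  interpret prob_space \<pi> by fact
  interpret pair_sigma_finite lborel \<pi> by unfold_locales
  have mixture: "(\<integral>\<^sup>+w. normal_density (Z w) \<sigma> z \<partial>\<pi>) = ennreal (enn2real (\<integral>\<^sup>+w. normal_density (Z w) \<sigma> z \<partial>\<pi>))"
    "enn2real (\<integral>\<^sup>+w. normal_density (Z w) \<sigma> z \<partial>\<pi>) > 0"
    if "Z \<in> borel_measurable \<pi>" for Z z
    using gauss_mixture_pos_finite[OF \<pi> that \<sigma>, of z] by (auto simp: enn2real_positive_iff less_top)
  let ?H = "\<lambda>w z. ennreal (normal_density (X w) \<sigma> z powr \<alpha> * normal_density (Y w) \<sigma> z powr (1-\<alpha>))"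
  have "(\<integral>\<^sup>+z. ennreal (enn2real (\<integral>\<^sup>+w. normal_density (X w) \<sigma> z \<partial>\<pi>) powr \<alpha>
                      * enn2real (\<integral>\<^sup>+w. normal_density (Y w) \<sigma> z \<partial>\<pi>) powr (1-\<alpha>)) \<partial>lborel)
      \<le> (\<integral>\<^sup>+z. \<integral>\<^sup>+w. ?H w z \<partial>\<pi> \<partial>lborel)"
    using \<alpha> \<sigma> mixture[of X] mixture[of Y]
    by (intro nn_integral_mono nn_integral_powr_perspective_ge) (auto simp: normal_density_pos less_imp_le)
  also have "\<dots> = (\<integral>\<^sup>+w. \<integral>\<^sup>+z. ?H w z \<partial>lborel \<partial>\<pi>)"
    by (rule Fubini'[symmetric]) measurable
  also have "\<dots> = (\<integral>\<^sup>+w. ennreal (exp (\<alpha>*(\<alpha>-1)*(X w - Y w)\<^sup>2/(2*\<sigma>\<^sup>2))) \<partial>\<pi>)"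
    using \<sigma> by (simp add: nn_integral_normal_density_powr_mult)
  also have "\<dots> \<le> (\<integral>\<^sup>+w. ennreal (exp (\<alpha>*(\<alpha>-1)*D\<^sup>2/(2*\<sigma>\<^sup>2))) \<partial>\<pi>)"
  proof (rule nn_integral_mono_AE)
    show "AE w in \<pi>. ennreal (exp (\<alpha>*(\<alpha>-1)*(X w - Y w)\<^sup>2/(2*\<sigma>\<^sup>2))) \<le> ennreal (exp (\<alpha>*(\<alpha>-1)*D\<^sup>2/(2*\<sigma>\<^sup>2)))"
      using close
    proof eventually_elim
      case (elim w)
      then have "(X w - Y w)\<^sup>2 \<le> D\<^sup>2"
        by (metis abs_ge_zero power2_abs power_mono)
      then show ?case
        using \<alpha> \<sigma> by (auto intro!: ennreal_leI divide_right_mono mult_left_mono)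
    qed
  qed
  finally show ?thesis by (simp add: emeasure_space_1)
qed

lemma renyi_div_gauss_mixtures_le:
  fixes \<pi> :: "'a measure" and X Y :: "'a \<Rightarrow> real" and \<sigma> \<alpha> D :: real
  assumes \<sigma>: "\<sigma> > 0" and \<alpha>: "\<alpha> > 1" and \<pi>: "prob_space \<pi>"
    and [measurable]: "X \<in> borel_measurable \<pi>" "Y \<in> borel_measurable \<pi>"
    and close: "AE w in \<pi>. \<bar>X w - Y w\<bar> \<le> D"
  shows "renyi_div \<alpha> (density lborel (\<lambda>z. \<integral>\<^sup>+w. normal_density (X w) \<sigma> z \<partial>\<pi>))
                      (density lborel (\<lambda>z. \<integral>\<^sup>+w. normal_density (Y w) \<sigma> z \<partial>\<pi>))
         \<le> ennreal (\<alpha> * D\<^sup>2 / (2*\<sigma>\<^sup>2))"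
proof -
  interpret prob_space \<pi> by fact
  interpret pair_sigma_finite lborel \<pi> by unfold_locales
  define p where "p z = enn2real (\<integral>\<^sup>+w. normal_density (X w) \<sigma> z \<partial>\<pi>)" for z
  define q where "q z = enn2real (\<integral>\<^sup>+w. normal_density (Y w) \<sigma> z \<partial>\<pi>)" for z
  have [measurable]: "p \<in> borel_measurable borel" "q \<in> borel_measurable borel"
    unfolding p_def q_def by measurable
  have p: "(\<integral>\<^sup>+w. normal_density (X w) \<sigma> z \<partial>\<pi>) = ennreal (p z)" "p z \<ge> 0" for z
    using gauss_mixture_pos_finite(2)[OF \<pi> _ \<sigma>, of X z] by (auto simp: p_def less_top)
  have q: "(\<integral>\<^sup>+w. normal_density (Y w) \<sigma> z \<partial>\<pi>) = ennreal (q z)" "q z > 0" for z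
    using gauss_mixture_pos_finite[OF \<pi> _ \<sigma>, of Y z] by (auto simp: q_def enn2real_positive_iff less_top)
  have "renyi_div \<alpha> (density lborel p) (density lborel q)
      \<le> ennreal (ln (exp (\<alpha>*(\<alpha>-1)*D\<^sup>2/(2*\<sigma>\<^sup>2))) / (\<alpha> - 1))"
    using nn_integral_gauss_mixtures_powr_le[OF \<sigma> \<alpha> \<pi> _ _ close] nn_integral_gauss_mixture[OF \<pi> _ \<sigma>, of Y]
    by (intro renyi_div_density_le[OF \<alpha>]) (auto simp: p q p_def[symmetric] q_def[symmetric] less_imp_le)
  then show ?thesis
    using \<alpha> by (simp add: p(1) q(1))
qed

section \<open>Couplings and the Gaussian mechanism\<close>

lemma AE_in_msupport:
  fixes M :: "'a::second_countable_topology measure"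
  assumes sets_M: "sets M = sets borel"
  shows "AE z in M. z \<in> msupport M"
proof -
  obtain \<B> :: "'a set set" where \<B>: "countable \<B>" "\<And>C. C \<in> \<B> \<Longrightarrow> open C"
    "\<And>S. open S \<Longrightarrow> \<exists>U\<subseteq>\<B>. S = \<Union>U"
    by (rule univ_second_countable) blast
  have open_sets: "S \<in> sets M" if "open S" for S
    using that by (simp add: sets_M)
  define \<B>0 where "\<B>0 = {b\<in>\<B>. emeasure M b = 0}"
  have "\<Union>\<B>0 \<in> null_sets M"
    using \<B> countable_subset[of \<B>0 \<B>]
    by (intro null_sets_UN'[where I=\<B>0 and N="\<lambda>b. b", simplified]) (auto simp: \<B>0_def null_sets_def open_sets)
  then show ?thesis
  proof (rule AE_I', safe)
    fix z assume "z \<notin> msupport M"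
    then obtain U where U: "open U" "z \<in> U" "emeasure M U = 0"
      by (auto simp: msupport_def not_less)
    obtain V where "V \<subseteq> \<B>" "U = \<Union>V" using \<B>(3)[OF U(1)] by blast
    then obtain b where b: "b \<in> \<B>" "b \<subseteq> U" "z \<in> b" using U(2) by blast
    have "emeasure M b = 0"
      using emeasure_mono[OF b(2) open_sets[OF U(1)]] U(3) by simp
    then show "z \<in> \<Union>\<B>0" using b by (auto simp: \<B>0_def)
  qed
qed

lemma W_inf_less_imp_coupling:
  assumes "W_inf \<nu> \<mu> < ereal D"
  obtains \<pi> where "\<pi> \<in> couplings \<nu> \<mu>" "AE w in \<pi>. \<bar>fst w - snd w\<bar> \<le> D"
proof -
  obtain \<pi> where \<pi>: "\<pi> \<in> couplings \<nu> \<mu>" and sup: "(SUP z \<in> msupport \<pi>. ereal \<bar>fst z - snd z\<bar>) < ereal D"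
    using assms unfolding W_inf_def by (auto simp: INF_less_iff)
  have "sets \<pi> = sets (borel \<Otimes>\<^sub>M borel)"
    using \<pi> by (simp add: couplings_def)
  then have "sets \<pi> = sets borel" by (simp only: borel_prod)
  then have "AE w in \<pi>. w \<in> msupport \<pi>" by (rule AE_in_msupport)
  then have "AE w in \<pi>. \<bar>fst w - snd w\<bar> \<le> D"
  proof eventually_elim
    case (elim w)
    then have "ereal \<bar>fst w - snd w\<bar> < ereal D"
      using sup by (meson SUP_upper le_less_trans)
    then show ?case by simp
  qed
  with \<pi> show ?thesis by (rule that)
qed

lemma prod_vec_nth_eq_prod_Basis:
  fixes z :: "real^'n"
  shows "(\<Prod>i\<in>UNIV. h (z $ i)) = (\<Prod>b\<in>Basis. h (z \<bullet> b))"
proof -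
  have "inj (\<lambda>i::'n. axis i (1::real))" by (auto simp: inj_on_def axis_eq_axis)
  then show ?thesis
    by (simp add: Basis_vec_def prod.reindex UNION_singleton_eq_range inner_axis)
qed

lemma inner_sum_Basis_scaleR:
  fixes f :: "'a::euclidean_space \<Rightarrow> real"
  assumes "b \<in> Basis"
  shows "(\<Sum>i\<in>Basis. f i *\<^sub>R i) \<bullet> b = f b"
  using assms by (simp add: inner_sum_left inner_Basis if_distrib cong: if_cong)

lemma indicator_PiE_eq_prod:
  assumes "f \<in> extensional I" "finite I"
  shows "(indicator (Pi\<^sub>E I A) f :: ennreal) = (\<Prod>i\<in>I. indicator (A i) (f i))"
proof (cases "f \<in> Pi\<^sub>E I A")
  case False
  then obtain i where "i \<in> I" "f i \<notin> A i" using assms by (auto simp: PiE_def extensional_def)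
  then show ?thesis using False assms by (auto simp: prod_zero_iff intro!: bexI[of _ i])
qed (auto simp: PiE_def indicator_def intro!: prod.neutral)

lemma density_PiM_lborel_eq_PiM_density:
  fixes g :: "real \<Rightarrow> ennreal"
  assumes I: "finite I" and [measurable]: "g \<in> borel_measurable borel"
    and "sigma_finite_measure (density lborel g)"
  shows "density (PiM I (\<lambda>_. lborel)) (\<lambda>x. \<Prod>i\<in>I. g (x i)) = PiM I (\<lambda>_. density lborel g)"
proof -
  interpret G: product_sigma_finite "\<lambda>_. density lborel g"
    using assms(3) by (simp add: product_sigma_finite_def)
  interpret L: product_sigma_finite "\<lambda>_. lborel :: real measure"
    by (simp add: product_sigma_finite_def lborel.sigma_finite_measure_axioms)
  show ?thesis
  proof (rule G.PiM_eqI[OF I])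
    fix A assume "\<And>i. i \<in> I \<Longrightarrow> A i \<in> sets (density lborel g)"
    then have A[measurable]: "\<And>i. i \<in> I \<Longrightarrow> A i \<in> sets borel" by simp
    have "emeasure (density (PiM I (\<lambda>_. lborel)) (\<lambda>x. \<Prod>i\<in>I. g (x i))) (Pi\<^sub>E I A)
        = (\<integral>\<^sup>+x. (\<Prod>i\<in>I. g (x i) * indicator (A i) (x i)) \<partial>PiM I (\<lambda>_. lborel))"
      using I by (subst emeasure_density)
        (auto intro!: nn_integral_cong sets_PiM_I_finite
              simp: indicator_PiE_eq_prod prod.distrib space_PiM PiE_iff)
    also have "\<dots> = (\<Prod>i\<in>I. emeasure (density lborel g) (A i))"
      using I by (subst L.product_nn_integral_prod) (auto simp: emeasure_density)
    finally show "emeasure (density (PiM I (\<lambda>_. lborel)) (\<lambda>x. \<Prod>i\<in>I. g (x i))) (Pi\<^sub>E I A)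
        = (\<Prod>i\<in>I. emeasure (density lborel g) (A i))" .
  qed (simp cong: sets_PiM_cong)
qed

lemma gauss_vec_eq_distr_PiM:
  fixes \<sigma> :: real
  assumes \<sigma>: "\<sigma> > 0"
  shows "(gauss_vec \<sigma> :: (real^'n) measure)
       = distr (PiM Basis (\<lambda>_. density lborel (normal_density 0 \<sigma>))) borel (\<lambda>x. \<Sum>b\<in>Basis. x b *\<^sub>R b)"
proof -
  let ?T = "\<lambda>x. \<Sum>b\<in>(Basis :: (real^'n) set). x b *\<^sub>R b"
  have "gauss_vec \<sigma> = density (distr (PiM Basis (\<lambda>_. lborel)) borel ?T)
                          (\<lambda>z. \<Prod>b\<in>Basis. ennreal (normal_density 0 \<sigma> (z \<bullet> b)))"
    unfolding gauss_vec_def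
    by (subst lborel_eq) (simp add: prod_ennreal prod_vec_nth_eq_prod_Basis)
  also have "\<dots> = distr (density (PiM Basis (\<lambda>_. lborel))
                     (\<lambda>x. \<Prod>b\<in>Basis. ennreal (normal_density 0 \<sigma> (?T x \<bullet> b)))) borel ?T"
    by (rule density_distr) measurable
  also have "(\<lambda>x. \<Prod>b\<in>Basis. ennreal (normal_density 0 \<sigma> (?T x \<bullet> b)))
           = (\<lambda>x. \<Prod>b\<in>Basis. ennreal (normal_density 0 \<sigma> (x b)))"
    by (intro ext prod.cong) (simp_all add: inner_sum_Basis_scaleR)
  also have "density (PiM Basis (\<lambda>_. lborel)) \<dots> = PiM Basis (\<lambda>_. density lborel (normal_density 0 \<sigma>))"
    using prob_space_normal_density[OF \<sigma>]
    by (intro density_PiM_lborel_eq_PiM_density) (auto intro: prob_space_imp_sigma_finite)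
  finally show ?thesis .
qed

lemma indep_vars_PiM_components:
  assumes "\<And>i. i \<in> I \<Longrightarrow> prob_space (M i)"
  shows "prob_space.indep_vars (PiM I M) M (\<lambda>i x. x i) I"
proof -
  interpret prob_space "PiM I M" using assms by (rule prob_space_PiM)
  show ?thesis
  proof (cases "I = {}")
    case True
    then show ?thesis unfolding indep_vars_def2 indep_sets_def by simp
  next
    case False
    have "distr (PiM I M) (PiM I M) (\<lambda>x. restrict x I) = distr (PiM I M) (PiM I M) (\<lambda>x. x)"
      by (rule distr_cong) (auto simp: space_PiM)
    also have "\<dots> = PiM I (\<lambda>i. distr (PiM I M) (M i) (\<lambda>x. x i))"
      using assms by (auto simp: distr_PiM_component intro!: PiM_cong)
    finally show ?thesis
      using False by (subst indep_vars_iff_distr_eq_PiM') auto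
  qed
qed

lemma distr_PiM_normal_linear_comb:
  fixes c :: "'i \<Rightarrow> real" and \<sigma> :: real
  assumes I: "finite I" and \<sigma>: "\<sigma> > 0" and c: "(\<Sum>i\<in>I. (c i)\<^sup>2) = 1"
  shows "distr (PiM I (\<lambda>_. density lborel (normal_density 0 \<sigma>))) lborel (\<lambda>x. \<Sum>i\<in>I. c i * x i)
       = density lborel (normal_density 0 \<sigma>)"
proof -
  let ?N = "density lborel (normal_density 0 \<sigma>)"
  let ?P = "PiM I (\<lambda>_. ?N)"
  have N: "prob_space ?N" by (rule prob_space_normal_density[OF \<sigma>])
  interpret P: prob_space ?P by (rule prob_space_PiM) (use N in auto)
  define J where "J = {i\<in>I. c i \<noteq> 0}"
  have sum_J: "(\<Sum>i\<in>I. g i) = (\<Sum>i\<in>J. g i)" if "\<And>i. c i = 0 \<Longrightarrow> g i = 0" for g :: "'i \<Rightarrow> real"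
    using I that by (intro sum.mono_neutral_cong_right) (auto simp: J_def)
  have "J \<noteq> {}" using c sum_J[of "\<lambda>i. (c i)\<^sup>2"] by auto
  have "P.indep_vars (\<lambda>_. borel) (\<lambda>i x. c i * x i) I"
    using P.indep_vars_compose2[OF indep_vars_PiM_components[of I "\<lambda>_. ?N"], of "\<lambda>i y. c i * y"] N
    by (simp cong: measurable_cong_sets)
  then have indep: "P.indep_vars (\<lambda>_. borel) (\<lambda>i x. c i * x i) J"
    by (rule P.indep_vars_subset) (auto simp: J_def)
  have "distributed ?P lborel (\<lambda>x. x i) (normal_density 0 \<sigma>)" if "i \<in> I" for i
    using that N distr_PiM_component[of I "\<lambda>_. ?N" i]
    by (auto simp: distributed_def cong: distr_cong measurable_cong_sets)
  then have "distributed ?P lborel (\<lambda>x. c i * x i) (normal_density 0 (\<bar>c i\<bar> * \<sigma>))" if "i \<in> J" for i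
    using P.normal_density_affine[of "\<lambda>x. x i" 0 \<sigma> "c i" 0] that \<sigma> by (simp add: J_def)
  then have "distributed ?P lborel (\<lambda>x. \<Sum>i\<in>J. c i * x i)
               (normal_density (\<Sum>i\<in>J. 0) (sqrt (\<Sum>i\<in>J. (\<bar>c i\<bar> * \<sigma>)\<^sup>2)))"
    using I \<open>J \<noteq> {}\<close> indep \<sigma> by (intro P.sum_indep_normal) (auto simp: J_def)
  moreover have "(\<Sum>i\<in>J. (\<bar>c i\<bar> * \<sigma>)\<^sup>2) = \<sigma>\<^sup>2"
    using c sum_J[of "\<lambda>i. (c i)\<^sup>2"] by (simp add: power_mult_distrib sum_distrib_right[symmetric])
  moreover have "(\<lambda>x. \<Sum>i\<in>I. c i * x i) = (\<lambda>x. \<Sum>i\<in>J. c i * x i)"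
    by (intro ext sum_J) simp
  ultimately show ?thesis
    using \<sigma> by (simp add: distributed_def)
qed

lemma prob_space_gauss_vec: "\<sigma> > 0 \<Longrightarrow> prob_space (gauss_vec \<sigma>)"
  unfolding gauss_vec_eq_distr_PiM
  by (intro prob_space.prob_space_distr prob_space_PiM prob_space_normal_density) measurable

lemma proj_gauss_vec:
  fixes u :: "real^'n"
  assumes \<sigma>: "\<sigma> > 0" and u: "norm u = 1"
  shows "proj u (gauss_vec \<sigma>) = density lborel (normal_density 0 \<sigma>)"
proof -
  let ?P = "PiM (Basis :: (real^'n) set) (\<lambda>_. density lborel (normal_density 0 \<sigma>))"
  have "(\<Sum>b\<in>(Basis :: (real^'n) set). (b \<bullet> u)\<^sup>2) = u \<bullet> u"
    by (simp add: euclidean_inner[of u u] power2_eq_square inner_commute)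
  also have "\<dots> = 1"
    using u by (simp flip: power2_norm_eq_inner)
  finally have "distr ?P lborel (\<lambda>x. \<Sum>b\<in>Basis. (b \<bullet> u) * x b) = density lborel (normal_density 0 \<sigma>)"
    using \<sigma> by (intro distr_PiM_normal_linear_comb) auto
  moreover have "proj u (gauss_vec \<sigma>) = distr ?P lborel (\<lambda>x. \<Sum>b\<in>Basis. (b \<bullet> u) * x b)"
    unfolding proj_def gauss_vec_eq_distr_PiM[OF \<sigma>]
    by (subst distr_distr) (auto simp: comp_def inner_sum_left mult.commute intro!: distr_cong)
  ultimately show ?thesis by simp
qed

lemma convolution_density_right:
  fixes M :: "real measure" and g :: "real \<Rightarrow> ennreal"
  assumes "finite_measure M" and [measurable_cong]: "sets M = sets borel"
    and [measurable]: "g \<in> borel_measurable borel" and "finite_measure (density lborel g)"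
  shows "M \<star> density lborel g = density lborel (\<lambda>z. \<integral>\<^sup>+x. g (z - x) \<partial>M)"
proof (rule measure_eqI)
  fix A assume "A \<in> sets (M \<star> density lborel g)"
  then have [measurable]: "A \<in> sets borel" by simp
  interpret finite_measure M by fact
  interpret pair_sigma_finite M lborel by unfold_locales
  have "emeasure (M \<star> density lborel g) A = (\<integral>\<^sup>+x. \<integral>\<^sup>+y. g y * indicator A (x + y) \<partial>lborel \<partial>M)"
    using assms by (simp add: convolution_emeasure' nn_integral_density)
  also have "\<dots> = (\<integral>\<^sup>+x. \<integral>\<^sup>+z. g (z - x) * indicator A z \<partial>lborel \<partial>M)"
  proof (rule nn_integral_cong)
    fix x
    show "(\<integral>\<^sup>+y. g y * indicator A (x + y) \<partial>lborel) = (\<integral>\<^sup>+z. g (z - x) * indicator A z \<partial>lborel)"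
      using nn_integral_real_affine[of "\<lambda>z. g (z - x) * indicator A z" 1 x] by simp
  qed
  also have "\<dots> = (\<integral>\<^sup>+z. \<integral>\<^sup>+x. g (z - x) * indicator A z \<partial>M \<partial>lborel)"
    by (rule Fubini'[symmetric]) measurable
  also have "\<dots> = emeasure (density lborel (\<lambda>z. \<integral>\<^sup>+x. g (z - x) \<partial>M)) A"
    by (simp add: emeasure_density nn_integral_multc)
  finally show "emeasure (M \<star> density lborel g) A = emeasure (density lborel (\<lambda>z. \<integral>\<^sup>+x. g (z - x) \<partial>M)) A" .
qed simp

lemma proj_distr_add:
  fixes C :: "'x measure" and G :: "(real^'n) measure" and f :: "'x \<Rightarrow> real^'n"
  assumes "prob_space C" "prob_space G" and [measurable_cong]: "sets G = sets borel"
    and [measurable]: "f \<in> C \<rightarrow>\<^sub>M borel"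
  shows "proj u (distr (C \<Otimes>\<^sub>M G) borel (\<lambda>(x, n). f x + n)) = (distr C borel (\<lambda>x. f x \<bullet> u) \<star> proj u G)"
proof -
  have "sigma_finite_measure (distr G borel (\<lambda>n. n \<bullet> u))"
    using assms(2) by (intro prob_space_imp_sigma_finite prob_space.prob_space_distr) auto
  then have "distr C borel (\<lambda>x. f x \<bullet> u) \<Otimes>\<^sub>M proj u G
      = distr (C \<Otimes>\<^sub>M G) (borel \<Otimes>\<^sub>M borel) (\<lambda>(x, n). (f x \<bullet> u, n \<bullet> u))"
    unfolding proj_def by (intro pair_measure_distr) auto
  then show ?thesis
    unfolding convolution_def proj_def
    by (simp add: distr_distr comp_def split_beta' inner_add_left)
qed

lemma sets_cond_data[measurable_cong]: "sets (cond_data MX \<theta> s) = sets MX"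
  by (simp add: cond_data_def sets.space_closed sets.sigma_sets_eq)

lemma prob_space_cond_data:
  assumes "prob_space \<theta>" and sets_\<theta>: "sets \<theta> = sets (count_space UNIV \<Otimes>\<^sub>M MX)"
    and pos: "sec_prob MX \<theta> s > 0"
  shows "prob_space (cond_data MX \<theta> s)"
proof -
  interpret prob_space \<theta> by fact
  have space_\<theta>: "space \<theta> = UNIV \<times> space MX"
    using sets_eq_imp_space_eq[OF sets_\<theta>] by (simp add: space_pair_measure)
  have [measurable]: "{s} \<times> A \<in> sets \<theta>" if "A \<in> sets MX" for A
    unfolding sets_\<theta> using that by (intro pair_measureI) auto
  have [measurable]: "snd \<in> \<theta> \<rightarrow>\<^sub>M MX"
    by (simp add: measurable_cong_sets[OF sets_\<theta> refl])
  define c where "c = emeasure \<theta> ({s} \<times> space MX)"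
  have c: "c = ennreal (sec_prob MX \<theta> s)"
    by (simp add: c_def sec_prob_def emeasure_eq_measure)
  \<comment> \<open>\<open>measure_of\<close> alone gives no countable additivity: exhibit \<open>cond_data\<close> as \<open>\<theta>\<close>
    conditioned on \<open>S = s\<close> and pushed forward to the data\<close>
  define M where "M = distr (density \<theta> (\<lambda>w. indicator ({s} \<times> space MX) w / c)) MX snd"
  have emeasure_M: "emeasure M A = emeasure \<theta> ({s} \<times> A) / c" if A: "A \<in> sets MX" for A
  proof -
    have "emeasure M A = (\<integral>\<^sup>+w. indicator ({s} \<times> space MX) w / c * indicator (snd -` A \<inter> space \<theta>) w \<partial>\<theta>)"
      unfolding M_def using A by (simp add: emeasure_distr emeasure_density)
    also have "\<dots> = (\<integral>\<^sup>+w. indicator ({s} \<times> A) w / c \<partial>\<theta>)"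
      using sets.sets_into_space[OF A] space_\<theta>
      by (intro nn_integral_cong) (auto simp: indicator_def)
    also have "\<dots> = emeasure \<theta> ({s} \<times> A) / c"
      using A by (simp add: nn_integral_divide)
    finally show ?thesis .
  qed
  have "cond_data MX \<theta> s = measure_of (space MX) (sets MX) (emeasure M)"
    unfolding cond_data_def
    by (rule measure_of_eq) (auto simp: sets.space_closed emeasure_M c_def sets.sigma_sets_eq)
  also have "\<dots> = M"
    using measure_of_of_measure[of M] by (simp add: M_def)
  finally have "cond_data MX \<theta> s = M" .
  moreover have "emeasure M (space M) = c / c"
    using emeasure_M[OF sets.top] by (simp add: M_def c_def)
  moreover have "c / c = 1"
    using pos by (simp add: c divide_ennreal)
  ultimately show ?thesis by (simp add: prob_spaceI)
qed

lemma proj_gauss_mech_law: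
  fixes f :: "'x \<Rightarrow> real^'n"
  assumes "prob_space \<theta>" "sets \<theta> = sets (count_space UNIV \<Otimes>\<^sub>M MX)" "sec_prob MX \<theta> s > 0"
    and f: "f \<in> MX \<rightarrow>\<^sub>M borel" and \<sigma>: "\<sigma> > 0" and u: "norm u = 1"
  shows "proj u (gauss_mech_law MX f \<sigma> \<theta> s)
       = density lborel (\<lambda>z. \<integral>\<^sup>+a. normal_density a \<sigma> z \<partial>proj u (query_law MX \<theta> f s))"
proof -
  let ?C = "cond_data MX \<theta> s" and ?\<nu> = "proj u (query_law MX \<theta> f s)"
  have C: "prob_space ?C" using assms(1-3) by (rule prob_space_cond_data)
  have [measurable]: "f \<in> ?C \<rightarrow>\<^sub>M borel" using f by (simp cong: measurable_cong_sets)
  have \<nu>: "?\<nu> = distr ?C borel (\<lambda>x. f x \<bullet> u)"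
    unfolding proj_def query_law_def by (subst distr_distr) (auto simp: comp_def)
  have "proj u (gauss_mech_law MX f \<sigma> \<theta> s) = (?\<nu> \<star> density lborel (normal_density 0 \<sigma>))"
    unfolding gauss_mech_law_def \<nu> proj_gauss_vec[OF \<sigma> u, symmetric]
    using C prob_space_gauss_vec[OF \<sigma>] by (intro proj_distr_add) (auto simp: gauss_vec_def)
  also have "\<dots> = density lborel (\<lambda>z. \<integral>\<^sup>+a. normal_density 0 \<sigma> (z - a) \<partial>?\<nu>)"
    using prob_space.prob_space_distr[OF C, of "\<lambda>x. f x \<bullet> u" borel] prob_space_normal_density[OF \<sigma>]
    unfolding \<nu> by (intro convolution_density_right) (auto simp: prob_space_def)
  also have "(\<lambda>z. \<integral>\<^sup>+a. normal_density 0 \<sigma> (z - a) \<partial>?\<nu>) = (\<lambda>z. \<integral>\<^sup>+a. normal_density a \<sigma> z \<partial>?\<nu>)"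
    by (simp add: normal_density_def power2_commute)
  finally show ?thesis .
qed

text \<open>The infimum defining \<open>W_inf\<close> need not be attained, so the coupling bound is
  proved for every bound larger than \<open>D\<close> and passed to the limit.\<close>

lemma renyi_div_proj_gauss_mech_le:
  fixes f :: "'x \<Rightarrow> real^'n"
  assumes \<theta>: "prob_space \<theta>" "sets \<theta> = sets (count_space UNIV \<Otimes>\<^sub>M MX)"
    and pos: "sec_prob MX \<theta> si > 0" "sec_prob MX \<theta> sj > 0"
    and f: "f \<in> MX \<rightarrow>\<^sub>M borel" and \<sigma>: "\<sigma> > 0" and u: "norm u = 1" and \<alpha>: "\<alpha> > 1"
    and W: "W_inf (proj u (query_law MX \<theta> f si)) (proj u (query_law MX \<theta> f sj)) \<le> ereal D"
  shows "renyi_div \<alpha> (proj u (gauss_mech_law MX f \<sigma> \<theta> si)) (proj u (gauss_mech_law MX f \<sigma> \<theta> sj))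
       \<le> ennreal (\<alpha> * D\<^sup>2 / (2*\<sigma>\<^sup>2))"
    (is "?R \<le> _")
proof -
  let ?\<nu>i = "proj u (query_law MX \<theta> f si)" and ?\<nu>j = "proj u (query_law MX \<theta> f sj)"
  have bound: "?R \<le> ennreal (\<alpha> * D'\<^sup>2 / (2*\<sigma>\<^sup>2))" if "D < D'" for D'
  proof -
    have "W_inf ?\<nu>i ?\<nu>j < ereal D'" using W that by (simp add: le_less_trans)
    then obtain \<pi> where \<pi>: "\<pi> \<in> couplings ?\<nu>i ?\<nu>j" and close: "AE w in \<pi>. \<bar>fst w - snd w\<bar> \<le> D'"
      by (rule W_inf_less_imp_coupling)
    have "prob_space \<pi>" and [measurable_cong]: "sets \<pi> = sets (borel \<Otimes>\<^sub>M borel)"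
      and marginals: "distr \<pi> borel fst = ?\<nu>i" "distr \<pi> borel snd = ?\<nu>j"
      using \<pi> by (auto simp: couplings_def)
    have "(\<integral>\<^sup>+a. normal_density a \<sigma> z \<partial>distr \<pi> borel X) = (\<integral>\<^sup>+w. normal_density (X w) \<sigma> z \<partial>\<pi>)"
      if [measurable]: "X \<in> borel_measurable \<pi>" for X z
      by (subst nn_integral_distr) auto
    from this[of fst] this[of snd] show ?thesis
      using proj_gauss_mech_law[OF \<theta> pos(1) f \<sigma> u] proj_gauss_mech_law[OF \<theta> pos(2) f \<sigma> u]
        renyi_div_gauss_mixtures_le[OF \<sigma> \<alpha> \<open>prob_space \<pi>\<close> _ _ close]
      by (simp add: marginals[symmetric])
  qed
  have "((\<lambda>D'. ennreal (\<alpha> * D'\<^sup>2 / (2*\<sigma>\<^sup>2))) \<longlongrightarrow> ennreal (\<alpha> * D\<^sup>2 / (2*\<sigma>\<^sup>2))) (at_right D)"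
    using \<sigma> by (intro tendsto_ennrealI tendsto_intros) auto
  moreover have "\<forall>\<^sub>F D' in at_right D. ?R \<le> ennreal (\<alpha> * D'\<^sup>2 / (2*\<sigma>\<^sup>2))"
    using eventually_at_right_less[of D] by eventually_elim (rule bound)
  ultimately show ?thesis
    by (rule tendsto_lowerbound) simp
qed

section \<open>Averaging over directions\<close>

text \<open>\<open>Delta_inf\<close> need not be measurable in the direction, so its integrals below are
  lower integrals; they are handled through measurable minorants with the same integral.\<close>

lemma nn_integral_measurable_minorant:
  fixes g :: "'a \<Rightarrow> ennreal"
  obtains h where "h \<in> borel_measurable M" "\<And>x. h x \<le> g x" "integral\<^sup>N M h = integral\<^sup>N M g"
proof -
  define A where "A = {s. simple_function M s \<and> s \<le> g}"
  have "(\<lambda>_. 0) \<in> A" by (auto simp: A_def le_fun_def)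
  then obtain F :: "nat \<Rightarrow> ennreal"
    where F: "range F \<subseteq> integral\<^sup>S M ` A" "Sup (integral\<^sup>S M ` A) = Sup (range F)"
    using ennreal_SUP_countable_SUP[of A "integral\<^sup>S M"] by blast
  then have "\<forall>n. \<exists>s\<in>A. F n = integral\<^sup>S M s" by blast
  then obtain s where s: "\<And>n. s n \<in> A" "\<And>n. F n = integral\<^sup>S M (s n)" by metis
  have simple: "simple_function M (s n)" and below: "\<And>x. s n x \<le> g x" for n
    using s(1)[of n] by (auto simp: A_def le_fun_def)
  define h where "h x = (SUP n. s n x)" for x
  have h_meas: "h \<in> borel_measurable M"
    unfolding h_def by (intro borel_measurable_SUP borel_measurable_simple_function simple) simp
  have h_le: "h x \<le> g x" for x unfolding h_def by (intro SUP_least below)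
  have "integral\<^sup>N M g = Sup (range F)" unfolding nn_integral_def A_def[symmetric] F(2) ..
  also have "\<dots> \<le> integral\<^sup>N M h"
  proof (rule SUP_least)
    fix n
    have "F n = integral\<^sup>N M (s n)" using s(2) nn_integral_eq_simple_integral[OF simple] by simp
    also have "\<dots> \<le> integral\<^sup>N M h" unfolding h_def by (intro nn_integral_mono SUP_upper) auto
    finally show "F n \<le> integral\<^sup>N M h" .
  qed
  finally have "integral\<^sup>N M h = integral\<^sup>N M g"
    using nn_integral_mono[of M h g] h_le by (simp add: order.antisym)
  with h_meas h_le show ?thesis by (rule that)
qed

lemma nn_integral_cmult_le:
  fixes g :: "'a \<Rightarrow> ennreal" and c :: real
  assumes "c \<ge> 0"
  shows "(\<integral>\<^sup>+x. ennreal c * g x \<partial>M) \<le> ennreal c * integral\<^sup>N M g"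
proof (cases "c = 0")
  case False
  then have c: "ennreal c \<noteq> 0" "ennreal c \<noteq> top" using assms by auto
  obtain h where h[measurable]: "h \<in> borel_measurable M" and h_le: "\<And>x. h x \<le> ennreal c * g x"
    and int_h: "integral\<^sup>N M h = (\<integral>\<^sup>+x. ennreal c * g x \<partial>M)"
    using nn_integral_measurable_minorant[of M "\<lambda>x. ennreal c * g x"] by blast
  have h_eq: "ennreal c * (h x / ennreal c) = h x" for x
    using ennreal_mult_divide_eq[OF c, of "h x"] by (simp add: ennreal_times_divide mult.commute)
  have "h x / ennreal c \<le> g x" for x
  proof -
    have "h x / ennreal c \<le> ennreal c * g x / ennreal c"
      using h_le[of x] by (rule divide_right_mono_ennreal)
    also have "\<dots> = g x"
      using ennreal_mult_divide_eq[OF c, of "g x"] by (metis mult.commute)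
    finally show ?thesis .
  qed
  then have "(\<integral>\<^sup>+x. h x / ennreal c \<partial>M) \<le> integral\<^sup>N M g"
    by (rule nn_integral_mono)
  moreover have "(\<integral>\<^sup>+x. ennreal c * (h x / ennreal c) \<partial>M) = ennreal c * (\<integral>\<^sup>+x. h x / ennreal c \<partial>M)"
    by (rule nn_integral_cmult) measurable
  ultimately show ?thesis
    using int_h h_eq by (simp add: mult_left_mono)
qed simp

text \<open>\<open>real_of_ereal\<close> sends infinite values to 0, and the value off the unit sphere is
  irrelevant because slice distributions are concentrated on it.\<close>

definition Delta_sq :: "'x measure \<Rightarrow> ('s \<times> 's) set \<Rightarrow> ('s \<times> 'x) measure set \<Rightarrow> ('x \<Rightarrow> real^'d) \<Rightarrow> real^'d \<Rightarrow> real"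
  where "Delta_sq MX Q Th f u =
    (if u \<in> sphere 0 1 then (real_of_ereal (Delta_inf MX Q Th f u))\<^sup>2 else 0)"

lemma Delta_sq_le_sq:
  assumes "\<forall>v\<in>sphere 0 1. 0 \<le> Delta_inf MX Q Th f v"
    and "u \<in> sphere 0 1 \<Longrightarrow> Delta_inf MX Q Th f u \<le> ereal d"
  shows "Delta_sq MX Q Th f u \<le> d\<^sup>2"
proof (cases "u \<in> sphere 0 1")
  case True
  then have "0 \<le> Delta_inf MX Q Th f u" "Delta_inf MX Q Th f u \<le> ereal d"
    using assms by auto
  then show ?thesis
    using True by (cases "Delta_inf MX Q Th f u") (auto simp: Delta_sq_def intro: power_mono)
qed (simp add: Delta_sq_def)

lemma ave_sd_gauss_mech_le:
  fixes f :: "'x \<Rightarrow> real^'n"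
  assumes scen: "pufferfish_scenario MX Sec Q Th" and f: "f \<in> MX \<rightarrow>\<^sub>M borel"
    and slice: "slice_distribution \<omega>"
    and Delta_finite: "\<forall>u\<in>sphere 0 1. Delta_inf MX Q Th f u \<noteq> \<infinity>"
    and \<sigma>: "\<sigma> > 0" and \<alpha>: "\<alpha> > 1"
    and \<theta>: "\<theta> \<in> Th" and pair: "(si, sj) \<in> Q"
    and pos: "sec_prob MX \<theta> si > 0" "sec_prob MX \<theta> sj > 0"
  shows "ave_sd \<alpha> \<omega> (gauss_mech_law MX f \<sigma> \<theta> si) (gauss_mech_law MX f \<sigma> \<theta> sj)
       \<le> ennreal (\<alpha> / (2*\<sigma>\<^sup>2)) * (\<integral>\<^sup>+u. Delta_sq MX Q Th f u \<partial>\<omega>)"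
proof -
  interpret prob_space \<omega> using slice by (simp add: slice_distribution_def)
  have AE_sphere: "AE u in \<omega>. u \<in> sphere 0 1"
    using slice by (intro AE_prob_1) (simp add: slice_distribution_def emeasure_eq_measure)
  have \<theta>_sets: "prob_space \<theta>" "sets \<theta> = sets (count_space UNIV \<Otimes>\<^sub>M MX)"
    using scen \<theta> by (auto simp: pufferfish_scenario_def)
  have "ave_sd \<alpha> \<omega> (gauss_mech_law MX f \<sigma> \<theta> si) (gauss_mech_law MX f \<sigma> \<theta> sj)
      \<le> (\<integral>\<^sup>+u. ennreal (\<alpha> / (2*\<sigma>\<^sup>2)) * Delta_sq MX Q Th f u \<partial>\<omega>)"
    unfolding ave_sd_def
  proof (rule nn_integral_mono_AE)
    show "AE u in \<omega>. renyi_div \<alpha> (proj u (gauss_mech_law MX f \<sigma> \<theta> si)) (proj u (gauss_mech_law MX f \<sigma> \<theta> sj))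
        \<le> ennreal (\<alpha> / (2*\<sigma>\<^sup>2)) * Delta_sq MX Q Th f u"
      using AE_sphere
    proof eventually_elim
      case (elim u)
      let ?D = "real_of_ereal (Delta_inf MX Q Th f u)"
      have "W_inf (proj u (query_law MX \<theta> f si)) (proj u (query_law MX \<theta> f sj)) \<le> Delta_inf MX Q Th f u"
        unfolding Delta_inf_def using \<theta> pair pos by (intro SUP_upper2[of "(si, sj, \<theta>)"]) auto
      also have "\<dots> \<le> ereal ?D"
        using Delta_finite elim by (cases "Delta_inf MX Q Th f u") auto
      finally have "renyi_div \<alpha> (proj u (gauss_mech_law MX f \<sigma> \<theta> si)) (proj u (gauss_mech_law MX f \<sigma> \<theta> sj))
          \<le> ennreal (\<alpha> * ?D\<^sup>2 / (2*\<sigma>\<^sup>2))"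
        using elim by (intro renyi_div_proj_gauss_mech_le[OF \<theta>_sets pos f \<sigma> _ \<alpha>]) auto
      then show ?case
        using elim \<alpha> by (simp add: Delta_sq_def ennreal_mult[symmetric])
    qed
  qed
  also have "\<dots> \<le> ennreal (\<alpha> / (2*\<sigma>\<^sup>2)) * (\<integral>\<^sup>+u. Delta_sq MX Q Th f u \<partial>\<omega>)"
    using \<alpha> by (intro nn_integral_cmult_le) auto
  finally show ?thesis .
qed

lemma ave_srpp_gauss_mech:
  fixes f :: "'x \<Rightarrow> real^'n"
  assumes "pufferfish_scenario MX Sec Q Th" "f \<in> MX \<rightarrow>\<^sub>M borel" "slice_distribution \<omega>"
    and "\<forall>u\<in>sphere 0 1. Delta_inf MX Q Th f u \<noteq> \<infinity>"
    and \<sigma>: "\<sigma> > 0" and \<alpha>: "\<alpha> > 1" and \<epsilon>: "\<epsilon> > 0"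
    and E: "(\<integral>\<^sup>+u. Delta_sq MX Q Th f u \<partial>\<omega>) \<le> ennreal E" and \<sigma>_ge: "\<sigma>\<^sup>2 \<ge> \<alpha> / (2*\<epsilon>) * E"
  shows "ave_srpp \<alpha> \<epsilon> \<omega> MX Q Th (gauss_mech_law MX f \<sigma>)"
  unfolding ave_srpp_def
proof (intro ballI impI, clarify)
  fix \<theta> si sj assume "\<theta> \<in> Th" "(si, sj) \<in> Q" "sec_prob MX \<theta> si > 0" "sec_prob MX \<theta> sj > 0"
  then have "ave_sd \<alpha> \<omega> (gauss_mech_law MX f \<sigma> \<theta> si) (gauss_mech_law MX f \<sigma> \<theta> sj)
      \<le> ennreal (\<alpha> / (2*\<sigma>\<^sup>2)) * (\<integral>\<^sup>+u. Delta_sq MX Q Th f u \<partial>\<omega>)"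
    by (rule ave_sd_gauss_mech_le[OF assms(1-4) \<sigma> \<alpha>])
  also have "\<dots> \<le> ennreal (\<alpha> / (2*\<sigma>\<^sup>2)) * ennreal E"
    using E by (rule mult_left_mono) simp
  also have "\<dots> \<le> ennreal \<epsilon>"
  proof (cases "E \<ge> 0")
    case True
    have "\<alpha> / (2*\<sigma>\<^sup>2) * E \<le> \<epsilon>"
      using \<sigma>_ge \<sigma> \<epsilon> by (simp add: field_simps)
    then show ?thesis using True \<alpha> by (simp add: ennreal_mult[symmetric] ennreal_leI)
  qed (simp add: ennreal_neg)
  finally show "ave_sd \<alpha> \<omega> (gauss_mech_law MX f \<sigma> \<theta> si) (gauss_mech_law MX f \<sigma> \<theta> sj) \<le> ennreal \<epsilon>" .
qed

section \<open>Estimating the average sensitivity from sampled directions\<close>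

lemma PiM_sample_mean_Hoeffding:
  fixes h :: "'a \<Rightarrow> real" and m :: nat
  assumes \<omega>: "prob_space \<omega>" and [measurable]: "h \<in> borel_measurable \<omega>"
    and h: "\<And>x. x \<in> space \<omega> \<Longrightarrow> 0 \<le> h x \<and> h x \<le> b" and b: "b > 0" and m: "m > 0" and t: "t \<ge> 0"
  shows "measure (PiM {..<m} (\<lambda>_. \<omega>))
           {u \<in> space (PiM {..<m} (\<lambda>_. \<omega>)). (\<Sum>l<m. h (u l)) / real m \<le> (\<integral>x. h x \<partial>\<omega>) - t}
         \<le> exp (-2 * real m * t\<^sup>2 / b\<^sup>2)"
proof -
  let ?\<Omega> = "PiM {..<m} (\<lambda>_. \<omega>)"
  interpret \<Omega>: prob_space ?\<Omega> by (rule prob_space_PiM) (use \<omega> in auto)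
  have [measurable]: "(\<lambda>u. u l) \<in> ?\<Omega> \<rightarrow>\<^sub>M \<omega>" if "l < m" for l
    using that by (intro measurable_component_singleton) auto
  have distr_h: "distr ?\<Omega> borel (\<lambda>u. h (u l)) = distr \<omega> borel h" if "l < m" for l
    using that \<omega> distr_PiM_component[of "{..<m}" "\<lambda>_. \<omega>" l]
    by (subst distr_distr[symmetric, where N=\<omega>, unfolded comp_def]) auto
  interpret H: Hoeffding_ineq_iid ?\<Omega> "{..<m}" "\<lambda>l u. h (u l)" "\<lambda>u. h (u 0)" 0 b "\<integral>x. h x \<partial>\<omega>"
  proof unfold_locales
    show "\<Omega>.indep_vars (\<lambda>_. borel) (\<lambda>l u. h (u l)) {..<m}"
      using \<Omega>.indep_vars_compose2[OF indep_vars_PiM_components[of "{..<m}" "\<lambda>_. \<omega>"], of "\<lambda>_. h"] \<omega>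
      by simp
    show "distr ?\<Omega> borel (\<lambda>u. h (u l)) = distr ?\<Omega> borel (\<lambda>u. h (u 0))" if "l \<in> {..<m}" for l
      using that m by (simp add: distr_h)
    show "AE u in ?\<Omega>. h (u 0) \<in> {0..b}"
      using h m by (intro AE_I2) (auto simp: space_PiM)
    have "\<Omega>.expectation (\<lambda>u. h (u 0)) = (\<integral>x. x \<partial>distr ?\<Omega> borel (\<lambda>u. h (u 0)))"
      using m by (intro integral_distr[symmetric]) auto
    also have "\<dots> = (\<integral>x. h x \<partial>\<omega>)"
      using m by (simp add: distr_h integral_distr)
    finally show "(\<integral>x. h x \<partial>\<omega>) \<equiv> \<Omega>.expectation (\<lambda>u. h (u 0))" by simp
  qed (use m in auto)
  show ?thesis
    using H.Hoeffding_ineq_le'[OF t b] m by (simp add: lessThan_empty_iff)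
qed

lemma nn_integral_eq_integral_minorant:
  fixes g :: "'a \<Rightarrow> real"
  assumes "finite_measure M" and g: "\<And>x. x \<in> space M \<Longrightarrow> 0 \<le> g x \<and> g x \<le> b"
  obtains h where "h \<in> borel_measurable M" "\<And>x. x \<in> space M \<Longrightarrow> 0 \<le> h x \<and> h x \<le> g x"
    "(\<integral>\<^sup>+x. g x \<partial>M) = ennreal (\<integral>x. h x \<partial>M)"
proof -
  interpret finite_measure M by fact
  obtain hh where [measurable]: "hh \<in> borel_measurable M" and hh_le: "\<And>x. hh x \<le> ennreal (g x)"
    and int_hh: "integral\<^sup>N M hh = (\<integral>\<^sup>+x. g x \<partial>M)"
    using nn_integral_measurable_minorant[of M "\<lambda>x. ennreal (g x)"] by blast
  define h where "h x = enn2real (hh x)" for x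
  have h_meas: "h \<in> borel_measurable M" unfolding h_def by measurable
  have hh_eq: "hh x = ennreal (h x)" for x
  proof -
    have "hh x < top" using hh_le[of x] by (simp add: le_less_trans)
    then show ?thesis by (simp add: h_def)
  qed
  have h_le: "0 \<le> h x \<and> h x \<le> g x" if "x \<in> space M" for x
  proof -
    have "ennreal (h x) \<le> ennreal (g x)" using hh_le[of x] by (simp only: hh_eq)
    moreover have "0 \<le> h x" by (simp add: h_def)
    ultimately show ?thesis using g[OF that] by simp
  qed
  have "integrable M h"
    using h_meas h_le g by (intro integrable_const_bound[where B=b]) (auto intro: order.trans)
  moreover have "hh = (\<lambda>x. ennreal (h x))" by (simp add: fun_eq_iff hh_eq)
  ultimately have "(\<integral>\<^sup>+x. g x \<partial>M) = ennreal (\<integral>x. h x \<partial>M)"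
    using h_le unfolding int_hh[symmetric] by (auto intro: nn_integral_eq_integral)
  with h_meas h_le show ?thesis by (rule that)
qed

lemma nn_integral_le_sample_mean_whp:
  fixes g :: "'a \<Rightarrow> real" and m :: nat
  assumes \<omega>: "prob_space \<omega>" and g: "\<And>x. x \<in> space \<omega> \<Longrightarrow> 0 \<le> g x \<and> g x \<le> b"
    and m: "m > 0" and \<beta>: "0 < \<beta>" "\<beta> \<le> 1"
  obtains B where "B \<in> sets (PiM {..<m} (\<lambda>_. \<omega>))" "measure (PiM {..<m} (\<lambda>_. \<omega>)) B \<le> \<beta>"
    "\<And>u. u \<in> space (PiM {..<m} (\<lambda>_. \<omega>)) - B \<Longrightarrow>
       (\<integral>\<^sup>+x. g x \<partial>\<omega>) \<le> ennreal ((\<Sum>l<m. g (u l)) / real m + b * sqrt (ln (1 / \<beta>) / (2 * real m)))"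
proof (cases "b > 0")
  case False
  then have "g x = 0" if "x \<in> space \<omega>" for x using g[OF that] by linarith
  then have "(\<integral>\<^sup>+x. g x \<partial>\<omega>) = 0" by (simp cong: nn_integral_cong)
  then show ?thesis using \<beta> by (intro that[of "{}"]) auto
next
  case b: True
  let ?\<Omega> = "PiM {..<m} (\<lambda>_. \<omega>)"
  have "finite_measure \<omega>" using \<omega> by (simp add: prob_space_def)
  then obtain h where [measurable]: "h \<in> borel_measurable \<omega>"
    and h_le: "\<And>x. x \<in> space \<omega> \<Longrightarrow> 0 \<le> h x \<and> h x \<le> g x"
    and lower_int: "(\<integral>\<^sup>+x. g x \<partial>\<omega>) = ennreal (\<integral>x. h x \<partial>\<omega>)"
    using nn_integral_eq_integral_minorant[where M=\<omega> and g=g, OF _ g] by blast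
  define t where "t = b * sqrt (ln (1 / \<beta>) / (2 * real m))"
  define B where "B = {u \<in> space ?\<Omega>. (\<Sum>l<m. h (u l)) / real m \<le> (\<integral>x. h x \<partial>\<omega>) - t}"
  have ln_\<beta>: "ln (1 / \<beta>) \<ge> 0" using \<beta> by simp
  then have "t \<ge> 0" using b by (simp add: t_def)
  have "t\<^sup>2 = b\<^sup>2 * (ln (1 / \<beta>) / (2 * real m))"
    using ln_\<beta> by (simp add: t_def power_mult_distrib)
  then have "exp (-2 * real m * t\<^sup>2 / b\<^sup>2) = \<beta>"
    using b m \<beta> by (simp add: ln_div)
  then have "measure ?\<Omega> B \<le> \<beta>"
    using PiM_sample_mean_Hoeffding[OF \<omega> _ _ b m \<open>t \<ge> 0\<close>, of h] h_le g
    by (auto simp: B_def intro: order.trans)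
  moreover have "B \<in> sets ?\<Omega>" unfolding B_def by measurable
  moreover have "(\<integral>\<^sup>+x. g x \<partial>\<omega>) \<le> ennreal ((\<Sum>l<m. g (u l)) / real m + t)"
    if u: "u \<in> space ?\<Omega> - B" for u
  proof -
    have "(\<Sum>l<m. h (u l)) / real m \<le> (\<Sum>l<m. g (u l)) / real m"
      using h_le u by (intro divide_right_mono sum_mono) (auto simp: space_PiM)
    then have "(\<integral>x. h x \<partial>\<omega>) \<le> (\<Sum>l<m. g (u l)) / real m + t"
      using u by (auto simp: B_def)
    then show ?thesis by (simp add: lower_int ennreal_leI)
  qed
  ultimately show ?thesis by (intro that[of B]) (auto simp: t_def)
qed

lemma measure_pair_ge_of_sections:
  assumes "prob_space M" "prob_space N" and A: "A \<in> sets (M \<Otimes>\<^sub>M N)"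
    and B: "B \<in> sets M" "measure M B \<le> \<beta>" and \<delta>: "\<delta> \<ge> 0"
    and sections: "AE x in M. x \<notin> B \<longrightarrow> (\<exists>C\<in>sets N. measure N C \<ge> 1 - \<delta> \<and> C \<subseteq> Pair x -` A)"
  shows "measure (M \<Otimes>\<^sub>M N) A \<ge> 1 - \<delta> - \<beta>"
proof -
  interpret M: prob_space M by fact
  interpret N: prob_space N by fact
  interpret P: prob_space "M \<Otimes>\<^sub>M N" by (rule prob_space_pair) unfold_locales
  have "emeasure (M \<Otimes>\<^sub>M N) (space (M \<Otimes>\<^sub>M N) - A)
      = (\<integral>\<^sup>+x. emeasure N (Pair x -` (space (M \<Otimes>\<^sub>M N) - A)) \<partial>M)"
    using A by (intro N.emeasure_pair_measure_alt) auto
  also have "\<dots> \<le> (\<integral>\<^sup>+x. ennreal \<delta> + indicator B x \<partial>M)"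
  proof (rule nn_integral_mono_AE)
    show "AE x in M. emeasure N (Pair x -` (space (M \<Otimes>\<^sub>M N) - A)) \<le> ennreal \<delta> + indicator B x"
      using sections AE_space
    proof eventually_elim
      case (elim x)
      show ?case
      proof (cases "x \<in> B")
        case True
        then show ?thesis using N.emeasure_le_1 by (simp add: add_increasing)
      next
        case False
        then obtain C where C: "C \<in> sets N" "measure N C \<ge> 1 - \<delta>" "C \<subseteq> Pair x -` A"
          using elim by blast
        have "Pair x -` (space (M \<Otimes>\<^sub>M N) - A) \<subseteq> space N - C"
          using C(3) elim by (auto simp: space_pair_measure)
        then have "emeasure N (Pair x -` (space (M \<Otimes>\<^sub>M N) - A)) \<le> emeasure N (space N - C)"
          using C(1) by (intro emeasure_mono) auto
        also have "\<dots> \<le> ennreal \<delta>"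
          using C(1,2) by (simp add: N.emeasure_eq_measure N.prob_compl ennreal_leI)
        finally show ?thesis using False by simp
      qed
    qed
  qed
  also have "\<dots> = ennreal \<delta> + ennreal (measure M B)"
    using B by (simp add: nn_integral_add M.emeasure_eq_measure M.prob_space)
  finally have "measure (M \<Otimes>\<^sub>M N) (space (M \<Otimes>\<^sub>M N) - A) \<le> \<delta> + measure M B"
    using \<delta> by (simp add: P.emeasure_eq_measure ennreal_plus[symmetric] del: ennreal_plus)
  then show ?thesis
    using B P.prob_compl[OF A] by simp
qed

lemma nn_integral_le_estimate_whp:
  fixes g :: "'a \<Rightarrow> real" and G :: "(nat \<Rightarrow> 'a) \<Rightarrow> 'r \<Rightarrow> nat \<Rightarrow> real" and m :: nat
  assumes \<omega>: "prob_space \<omega>" and \<Xi>: "prob_space \<Xi>"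
    and g: "\<And>x. x \<in> space \<omega> \<Longrightarrow> 0 \<le> g x \<and> g x \<le> b"
    and m: "m > 0" and \<beta>: "0 < \<beta>" "\<beta> \<le> 1" and \<delta>: "\<delta> \<ge> 0"
    and G_meas: "\<And>l. l < m \<Longrightarrow> (\<lambda>(u, \<xi>). G u \<xi> l) \<in> borel_measurable (PiM {..<m} (\<lambda>_. \<omega>) \<Otimes>\<^sub>M \<Xi>)"
    and cover: "AE u in PiM {..<m} (\<lambda>_. \<omega>).
      \<exists>C\<in>sets \<Xi>. measure \<Xi> C \<ge> 1 - \<delta> \<and> (\<forall>\<xi>\<in>C. \<forall>l<m. g (u l) \<le> G u \<xi> l)"
  obtains A where "A \<in> sets (PiM {..<m} (\<lambda>_. \<omega>) \<Otimes>\<^sub>M \<Xi>)"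
    "measure (PiM {..<m} (\<lambda>_. \<omega>) \<Otimes>\<^sub>M \<Xi>) A \<ge> 1 - \<delta> - \<beta>"
    "\<And>u \<xi>. (u, \<xi>) \<in> A \<Longrightarrow>
       (\<integral>\<^sup>+x. g x \<partial>\<omega>) \<le> ennreal ((\<Sum>l<m. G u \<xi> l) / real m + b * sqrt (ln (1 / \<beta>) / (2 * real m)))"
proof -
  let ?\<Omega> = "PiM {..<m} (\<lambda>_. \<omega>)"
  let ?t = "b * sqrt (ln (1 / \<beta>) / (2 * real m))"
  obtain B where B: "B \<in> sets ?\<Omega>" "measure ?\<Omega> B \<le> \<beta>"
    and mean: "\<And>u. u \<in> space ?\<Omega> - B \<Longrightarrow> (\<integral>\<^sup>+x. g x \<partial>\<omega>) \<le> ennreal ((\<Sum>l<m. g (u l)) / real m + ?t)"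
    using nn_integral_le_sample_mean_whp[where g=g, OF \<omega> g m \<beta>] by blast
  define A where "A = {x \<in> space (?\<Omega> \<Otimes>\<^sub>M \<Xi>).
    (\<integral>\<^sup>+x. g x \<partial>\<omega>) \<le> ennreal ((\<Sum>l<m. G (fst x) (snd x) l) / real m + ?t)}"
  have "(\<lambda>x. G (fst x) (snd x) l) \<in> borel_measurable (?\<Omega> \<Otimes>\<^sub>M \<Xi>)" if "l < m" for l
    using G_meas[OF that] by (simp add: split_beta')
  then have A_sets: "A \<in> sets (?\<Omega> \<Otimes>\<^sub>M \<Xi>)" unfolding A_def by measurable
  have "measure (?\<Omega> \<Otimes>\<^sub>M \<Xi>) A \<ge> 1 - \<delta> - \<beta>"
  proof (rule measure_pair_ge_of_sections[OF prob_space_PiM \<Xi> A_sets B \<delta>])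
    show "AE u in ?\<Omega>. u \<notin> B \<longrightarrow> (\<exists>C\<in>sets \<Xi>. 1 - \<delta> \<le> measure \<Xi> C \<and> C \<subseteq> Pair u -` A)"
      using cover AE_space
    proof eventually_elim
      case (elim u)
      then obtain C where C: "C \<in> sets \<Xi>" "measure \<Xi> C \<ge> 1 - \<delta>" and "\<forall>\<xi>\<in>C. \<forall>l<m. g (u l) \<le> G u \<xi> l"
        by blast
      then have le: "(\<Sum>l<m. g (u l)) / real m + ?t \<le> (\<Sum>l<m. G u \<xi> l) / real m + ?t" if "\<xi> \<in> C" for \<xi>
        using that by (intro add_right_mono divide_right_mono sum_mono) auto
      have "C \<subseteq> Pair u -` A" if "u \<notin> B"
      proof
        fix \<xi> assume \<xi>: "\<xi> \<in> C"
        have "(\<integral>\<^sup>+x. g x \<partial>\<omega>) \<le> ennreal ((\<Sum>l<m. g (u l)) / real m + ?t)"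
          using mean elim that by auto
        also have "\<dots> \<le> ennreal ((\<Sum>l<m. G u \<xi> l) / real m + ?t)"
          using le[OF \<xi>] by (rule ennreal_leI)
        finally show "\<xi> \<in> Pair u -` A"
          using elim \<xi> sets.sets_into_space[OF C(1)] by (auto simp: A_def space_pair_measure)
      qed
      then show ?case using C by blast
    qed
  qed (use \<omega> in auto)
  with A_sets show ?thesis
    by (rule that) (auto simp: A_def)
qed

theorem theorem3:
  fixes MX :: "'x measure" and Sec :: "'s set" and Q :: "('s \<times> 's) set"
    and Th :: "('s \<times> 'x) measure set" and f :: "'x \<Rightarrow> real^'d"
    and \<omega> :: "(real^'d) measure" and m :: nat
    and \<Xi> :: "'r measure" and Dhat :: "(nat \<Rightarrow> real^'d) \<Rightarrow> 'r \<Rightarrow> nat \<Rightarrow> real"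
    and \<Delta>0 \<alpha> \<epsilon> \<gamma> :: real
  assumes scen: "pufferfish_scenario MX Sec Q Th"
    and f_meas: "f \<in> MX \<rightarrow>\<^sub>M borel"
    and slice: "slice_distribution \<omega>"
    and m_pos: "m > 0"
    and Delta_bd: "\<forall>u\<in>sphere 0 1. 0 \<le> Delta_inf MX Q Th f u \<and> Delta_inf MX Q Th f u \<le> ereal \<Delta>0"
    and alpha: "\<alpha> > 1" and eps: "\<epsilon> > 0" and gam: "0 < \<gamma>" "\<gamma> < 1"
    and Xi: "prob_space \<Xi>"
    and Dhat_meas: "\<forall>l<m. (\<lambda>(u, \<xi>). Dhat u \<xi> l)
                       \<in> borel_measurable (PiM {..<m} (\<lambda>_. \<omega>) \<Otimes>\<^sub>M \<Xi>)"
    and Dhat_cover: "AE u in PiM {..<m} (\<lambda>_. \<omega>).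
        \<exists>A\<in>sets \<Xi>. measure \<Xi> A \<ge> 1 - \<gamma> / 2 \<and>
          (\<forall>\<xi>\<in>A. \<forall>l<m. Delta_inf MX Q Th f (u l) \<le> ereal (Dhat u \<xi> l))"
  shows "\<exists>A\<in>sets (PiM {..<m} (\<lambda>_. \<omega>) \<Otimes>\<^sub>M \<Xi>).
     measure (PiM {..<m} (\<lambda>_. \<omega>) \<Otimes>\<^sub>M \<Xi>) A \<ge> 1 - \<gamma> \<and>
     (\<forall>(u, \<xi>)\<in>A. \<forall>\<sigma>>0.
        \<sigma>\<^sup>2 \<ge> \<alpha> / (2 * \<epsilon>) * ((\<Sum>l<m. (Dhat u \<xi> l)\<^sup>2) / real m
                              + \<Delta>0\<^sup>2 * sqrt (ln (4 / \<gamma>) / (2 * real m)))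
        \<longrightarrow> ave_srpp \<alpha> \<epsilon> \<omega> MX Q Th (gauss_mech_law MX f \<sigma>))"
proof -
  let ?\<Omega> = "PiM {..<m} (\<lambda>_. \<omega>)" and ?\<Delta> = "Delta_sq MX Q Th f"
  have \<omega>: "prob_space \<omega>" using slice by (simp add: slice_distribution_def)
  have Delta_nonneg: "\<forall>v\<in>sphere 0 1. 0 \<le> Delta_inf MX Q Th f v" using Delta_bd by blast
  have Delta_sq_bounds: "0 \<le> ?\<Delta> v \<and> ?\<Delta> v \<le> \<Delta>0\<^sup>2" if "v \<in> space \<omega>" for v
    using Delta_bd Delta_sq_le_sq[OF Delta_nonneg, of v \<Delta>0] by (simp add: Delta_sq_def)
  have "AE u in ?\<Omega>. \<exists>C\<in>sets \<Xi>. measure \<Xi> C \<ge> 1 - \<gamma> / 2 \<and> (\<forall>\<xi>\<in>C. \<forall>l<m. ?\<Delta> (u l) \<le> (Dhat u \<xi> l)\<^sup>2)"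
    using Dhat_cover by eventually_elim (use Delta_sq_le_sq[OF Delta_nonneg] in fast)
  moreover have "(\<lambda>(u, \<xi>). (Dhat u \<xi> l)\<^sup>2) \<in> borel_measurable (?\<Omega> \<Otimes>\<^sub>M \<Xi>)" if "l < m" for l
    using Dhat_meas that unfolding split_beta' by (intro borel_measurable_power) auto
  moreover have "1 / (\<gamma> / 4) = 4 / \<gamma>" by simp
  ultimately obtain A where A: "A \<in> sets (?\<Omega> \<Otimes>\<^sub>M \<Xi>)" "measure (?\<Omega> \<Otimes>\<^sub>M \<Xi>) A \<ge> 1 - \<gamma> / 2 - \<gamma> / 4"
    and E: "\<And>u \<xi>. (u, \<xi>) \<in> A \<Longrightarrow> (\<integral>\<^sup>+v. ?\<Delta> v \<partial>\<omega>)
      \<le> ennreal ((\<Sum>l<m. (Dhat u \<xi> l)\<^sup>2) / real m + \<Delta>0\<^sup>2 * sqrt (ln (4 / \<gamma>) / (2 * real m)))"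
    using nn_integral_le_estimate_whp[where g="?\<Delta>" and G="\<lambda>u \<xi> l. (Dhat u \<xi> l)\<^sup>2" and b="\<Delta>0\<^sup>2"
        and \<beta>="\<gamma> / 4" and \<delta>="\<gamma> / 2", OF \<omega> Xi Delta_sq_bounds m_pos] gam
    by auto
  have "\<forall>v\<in>sphere 0 1. Delta_inf MX Q Th f v \<noteq> \<infinity>" using Delta_bd by force
  then have "ave_srpp \<alpha> \<epsilon> \<omega> MX Q Th (gauss_mech_law MX f \<sigma>)"
    if "(u, \<xi>) \<in> A" "\<sigma> > 0"
      "\<sigma>\<^sup>2 \<ge> \<alpha> / (2 * \<epsilon>) * ((\<Sum>l<m. (Dhat u \<xi> l)\<^sup>2) / real m + \<Delta>0\<^sup>2 * sqrt (ln (4 / \<gamma>) / (2 * real m)))"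
    for u \<xi> \<sigma>
    using that by (intro ave_srpp_gauss_mech[OF scen f_meas slice _ _ alpha eps E]) auto
  with A gam show ?thesis by (intro bexI[of _ A]) auto
qed

end
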